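(* Fix $p\in[0,1]$ and a sequence $\{\gamma_n\}$ with $\gamma_n\in[0,\frac12]$, $\gamma_n/\sqrt{\log n/n}\to\infty$ and $\gamma_n\to0$. For each $n$ let $\mathcal G_n(p)$ be the set of all graphs $G=(\mathcal V,\mathcal E)$ with $n$ vertices such that (1) every vertex has degree between $pn(1-\gamma_n)$ and $pn(1+\gamma_n)$, and (2) for all $u,v\in\mathcal V$, $|\mathcal N(u)\cap\mathcal N(v)|/|\mathcal N(v)|\ge p(1-\gamma_n)$. Let $G$ be an Erdős–Rényi random graph with $n$ vertices and edge probability $p$. Then there is a sequence $\theta_n\to0$ such that for every $n$, $\mathbb P(G\in\mathcal G_n(p))\ge1-\theta_n$.
   Context: $\mathcal N(v)$ denotes the set of neighbors of $v$ in $G$. *)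

theory Defs
  imports Complex_Main
begin

definition all_edges :: "nat \<Rightarrow> nat set set" where
  "all_edges n = {{u, v} | u v. u < n \<and> v < n \<and> u \<noteq> v}"

definition simple_graphs :: "nat \<Rightarrow> nat set set set" where
  "simple_graphs n = Pow (all_edges n)"

definition nbrs :: "nat set set \<Rightarrow> nat \<Rightarrow> nat set" where
  "nbrs E v = {u. {u, v} \<in> E}"

definition in_Gn :: "nat \<Rightarrow> real \<Rightarrow> real \<Rightarrow> nat set set \<Rightarrow> bool" where
  "in_Gn n p \<gamma> E \<longleftrightarrow>
     (\<forall>v<n. p * real n * (1 - \<gamma>) \<le> real (card (nbrs E v))
             \<and> real (card (nbrs E v)) \<le> p * real n * (1 + \<gamma>))
   \<and> (\<forall>u<n. \<forall>v<n. real (card (nbrs E u \<inter> nbrs E v)) / real (card (nbrs E v))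
                     \<ge> p * (1 - \<gamma>))"

definition er_prob :: "nat \<Rightarrow> real \<Rightarrow> (nat set set \<Rightarrow> bool) \<Rightarrow> real" where
  "er_prob n p P = (\<Sum>E \<in> {E \<in> simple_graphs n. P E}.
       p ^ card E * (1 - p) ^ (card (all_edges n) - card E))"

end

theory Submission
  imports Defs "HOL-Probability.Probability"
begin

(* Encode G(n,p) by independent Bernoulli coins, one per potential edge. The degree of v is a
   sum of n - 1 of these coins, and for u \<noteq> v and c = p(1 - \<gamma>) the statistic
   |N(u) \<inter> N(v)| - c |N(v) - {u}| is a sum of n - 2 independent terms with range of width 1,
   one for each third vertex w, with mean (n - 2) p\<^sup>2 \<gamma>; since |N(v)| \<le> |N(v) - {u}| + 1 and
   c \<le> 1, the statistic being at least 1 yields |N(u) \<inter> N(v)| \<ge> c |N(v)|. Hoeffding's inequality bounds the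
   probability that a degree leaves [pn(1 - \<gamma>), pn(1 + \<gamma>)] by 2/n\<^sup>2 and that the statistic
   drops below 1 by 1/n\<^sup>3 as soon as n \<gamma>\<^sup>2 p\<^sup>4 \<ge> 24 ln n, which the growth condition on \<gamma>
   guarantees eventually. A union bound over the n vertices and n\<^sup>2 pairs leaves failure
   probability at most 3/n. *)

section \<open>Hoeffding's inequality for functions of disjoint blocks of coordinates\<close>

lemma borel_measurable_PiM_finite_countable:
  fixes g :: "('a \<Rightarrow> 'b::countable) \<Rightarrow> real"
  assumes "finite I"
  shows "g \<in> borel_measurable (Pi\<^sub>M I (\<lambda>_. count_space UNIV))"
proof (rule measurableI)
  fix A :: "real set"
  let ?M = "Pi\<^sub>M I (\<lambda>_. count_space (UNIV :: 'b set))"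
  have singleton: "{x} \<in> sets ?M" if "x \<in> space ?M" for x
  proof -
    have "{x} = Pi\<^sub>E I (\<lambda>i. {x i})"
      using that by (auto simp: space_PiM PiE_iff intro!: PiE_singleton[symmetric])
    moreover have "Pi\<^sub>E I (\<lambda>i. {x i}) \<in> sets ?M"
      using assms by (intro sets_PiM_I_finite) auto
    ultimately show ?thesis
      by (simp only:)
  qed
  have "countable (space ?M)"
    using assms by (auto simp: space_PiM intro!: countable_PiE)
  then have "countable (g -` A \<inter> space ?M)"
    by (rule countable_subset[rotated]) auto
  then show "g -` A \<inter> space ?M \<in> sets ?M"
    by (rule sets.countable[rotated]) (auto intro: singleton)
qed simp

lemma indep_vars_Pi_pmf_local_functions:
  fixes Q :: "'a \<Rightarrow> 'b::countable pmf" and X :: "'c \<Rightarrow> ('a \<Rightarrow> 'b) \<Rightarrow> real"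
  assumes "finite A"
    and K: "\<And>w. w \<in> L \<Longrightarrow> K w \<subseteq> A" "disjoint_family_on K L"
    and locality: "\<And>w f g. w \<in> L \<Longrightarrow> (\<And>e. e \<in> K w \<Longrightarrow> f e = g e) \<Longrightarrow> X w f = X w g"
  shows "prob_space.indep_vars (measure_pmf (Pi_pmf A d Q)) (\<lambda>_. borel) X L"
proof -
  define M where "M = measure_pmf (Pi_pmf A d Q)"
  interpret P: prob_space M
    unfolding M_def by (rule measure_pmf.prob_space_axioms)
  have "P.indep_vars (\<lambda>_. count_space UNIV) (\<lambda>e f. f e) A"
    unfolding M_def by (rule indep_vars_Pi_pmf[OF \<open>finite A\<close>])
  then have "P.indep_vars (\<lambda>w. Pi\<^sub>M (K w) (\<lambda>_. count_space UNIV)) (\<lambda>w f. restrict f (K w)) L"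
    by (rule P.indep_vars_restrict[OF _ K])
  then have "P.indep_vars (\<lambda>_. borel) (\<lambda>w f. X w (restrict f (K w))) L"
  proof (rule P.indep_vars_compose2)
    fix w assume "w \<in> L"
    then have "finite (K w)"
      using K(1) \<open>finite A\<close> by (blast intro: finite_subset)
    then show "X w \<in> borel_measurable (Pi\<^sub>M (K w) (\<lambda>_. count_space UNIV))"
      by (rule borel_measurable_PiM_finite_countable)
  qed
  moreover have "(\<lambda>f. X w (restrict f (K w))) = X w" if "w \<in> L" for w
    by (rule ext, rule locality[OF that]) simp
  ultimately have "P.indep_vars (\<lambda>_. borel) X L"
    using P.indep_vars_cong[where I = L and J = L and X = "\<lambda>w f. X w (restrict f (K w))" and Y = X
        and M' = "\<lambda>_. borel" and N' = "\<lambda>_. borel"]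
    by blast
  then show ?thesis
    by (simp only: M_def)
qed

lemma
  fixes Q :: "'a \<Rightarrow> 'b::countable pmf" and X :: "'c \<Rightarrow> ('a \<Rightarrow> 'b) \<Rightarrow> real"
  assumes "finite A" "finite L"
    and K: "\<And>w. w \<in> L \<Longrightarrow> K w \<subseteq> A" "disjoint_family_on K L"
    and locality: "\<And>w f g. w \<in> L \<Longrightarrow> (\<And>e. e \<in> K w \<Longrightarrow> f e = g e) \<Longrightarrow> X w f = X w g"
    and bounded: "\<And>w f. w \<in> L \<Longrightarrow> X w f \<in> {a w..b w}"
    and mean: "(\<Sum>w\<in>L. measure_pmf.expectation (Pi_pmf A d Q) (X w)) = \<mu>"
    and \<epsilon>: "0 \<le> \<epsilon>" and spread: "0 < (\<Sum>w\<in>L. (b w - a w)\<^sup>2)"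
  shows Hoeffding_ineq_Pi_pmf_le:
      "measure_pmf.prob (Pi_pmf A d Q) {f. (\<Sum>w\<in>L. X w f) \<le> \<mu> - \<epsilon>}
         \<le> exp (-2 * \<epsilon>\<^sup>2 / (\<Sum>w\<in>L. (b w - a w)\<^sup>2))"
    and Hoeffding_ineq_Pi_pmf_abs_ge:
      "measure_pmf.prob (Pi_pmf A d Q) {f. \<epsilon> \<le> \<bar>(\<Sum>w\<in>L. X w f) - \<mu>\<bar>}
         \<le> 2 * exp (-2 * \<epsilon>\<^sup>2 / (\<Sum>w\<in>L. (b w - a w)\<^sup>2))"
proof -
  define M where "M = measure_pmf (Pi_pmf A d Q)"
  interpret P: prob_space M
    unfolding M_def by (rule measure_pmf.prob_space_axioms)
  have "P.indep_vars (\<lambda>_. borel) X L"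
    unfolding M_def using \<open>finite A\<close> K locality by (rule indep_vars_Pi_pmf_local_functions)
  then interpret H: Hoeffding_ineq M L X a b \<mu>
    by unfold_locales (use \<open>finite L\<close> bounded mean in \<open>auto simp: M_def\<close>)
  show "measure_pmf.prob (Pi_pmf A d Q) {f. (\<Sum>w\<in>L. X w f) \<le> \<mu> - \<epsilon>}
         \<le> exp (-2 * \<epsilon>\<^sup>2 / (\<Sum>w\<in>L. (b w - a w)\<^sup>2))"
    using H.Hoeffding_ineq_le[OF \<epsilon> spread] by (simp add: M_def)
  show "measure_pmf.prob (Pi_pmf A d Q) {f. \<epsilon> \<le> \<bar>(\<Sum>w\<in>L. X w f) - \<mu>\<bar>}
         \<le> 2 * exp (-2 * \<epsilon>\<^sup>2 / (\<Sum>w\<in>L. (b w - a w)\<^sup>2))"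
    using H.Hoeffding_ineq_abs_ge[OF \<epsilon> spread] by (simp add: M_def)
qed

lemma expectation_Pi_bernoulli_all:
  assumes "finite A" "S \<subseteq> A" "0 \<le> p" "p \<le> 1"
  shows "measure_pmf.expectation (Pi_pmf A False (\<lambda>_. bernoulli_pmf p)) (\<lambda>f. of_bool (\<forall>e\<in>S. f e))
           = p ^ card S"
proof -
  have "(\<lambda>f. of_bool (\<forall>e\<in>S. f e) :: real) = indicator (Pi A (\<lambda>e. if e \<in> S then {True} else UNIV))"
    using \<open>S \<subseteq> A\<close> by (auto simp: indicator_def Pi_iff fun_eq_iff)
  moreover have "(\<Prod>e\<in>A. measure_pmf.prob (bernoulli_pmf p) (if e \<in> S then {True} else UNIV))
                   = (\<Prod>e\<in>A. if e \<in> S then p else 1)"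
    using assms by (intro prod.cong) (auto simp: measure_pmf_single)
  ultimately show ?thesis
    using assms by (simp add: measure_Pi_pmf_Pi prod.If_cases Int_absorb1)
qed

section \<open>The Erdos-Renyi graph as a family of edge coins\<close>

definition edge_coins :: "nat \<Rightarrow> real \<Rightarrow> (nat set \<Rightarrow> bool) pmf" where
  "edge_coins n p = Pi_pmf (all_edges n) False (\<lambda>_. bernoulli_pmf p)"

definition coin_graph :: "nat \<Rightarrow> (nat set \<Rightarrow> bool) \<Rightarrow> nat set set" where
  "coin_graph n f = {e \<in> all_edges n. f e}"

lemma finite_all_edges: "finite (all_edges n)"
proof -
  have "all_edges n \<subseteq> (\<lambda>(u, v). {u, v}) ` ({..<n} \<times> {..<n})"
    unfolding all_edges_def by auto
  then show ?thesis
    by (rule finite_subset) auto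
qed

lemma doubleton_in_all_edges_iff: "{u, v} \<in> all_edges n \<longleftrightarrow> u < n \<and> v < n \<and> u \<noteq> v"
  unfolding all_edges_def by (auto simp: doubleton_eq_iff)

lemma nbrs_coin_graph: "v < n \<Longrightarrow> nbrs (coin_graph n f) v = {w \<in> {..<n} - {v}. f {w, v}}"
  unfolding nbrs_def coin_graph_def by (auto simp: doubleton_in_all_edges_iff)

lemma card_nbrs_coin_graph:
  assumes "v < n"
  shows "real (card (nbrs (coin_graph n f) v)) = (\<Sum>w\<in>{..<n} - {v}. of_bool (f {w, v}))"
proof -
  have "nbrs (coin_graph n f) v = ({..<n} - {v}) \<inter> {w. f {w, v}}"
    using assms by (auto simp: nbrs_coin_graph)
  then show ?thesis
    by simp
qed

lemma codegree_statistic_coin_graph: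
  assumes "u < n" "v < n" "u \<noteq> v"
  shows "real (card (nbrs (coin_graph n f) u \<inter> nbrs (coin_graph n f) v))
           - c * real (card (nbrs (coin_graph n f) v - {u}))
         = (\<Sum>w\<in>{..<n} - {u, v}. of_bool (f {w, u} \<and> f {w, v}) - c * of_bool (f {w, v}))"
proof -
  have "nbrs (coin_graph n f) u \<inter> nbrs (coin_graph n f) v = ({..<n} - {u, v}) \<inter> {w. f {w, u} \<and> f {w, v}}"
    using assms by (auto simp: nbrs_coin_graph)
  moreover have "nbrs (coin_graph n f) v - {u} = ({..<n} - {u, v}) \<inter> {w. f {w, v}}"
    using assms by (auto simp: nbrs_coin_graph)
  ultimately show ?thesis
    by (simp add: sum_subtractf sum_distrib_left[symmetric])
qed

lemma expectation_edge_coin: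
  assumes "e \<in> all_edges n" "0 \<le> p" "p \<le> 1"
  shows "measure_pmf.expectation (edge_coins n p) (\<lambda>f. of_bool (f e)) = p"
  using expectation_Pi_bernoulli_all[of "all_edges n" "{e}" p] assms
  by (simp add: edge_coins_def finite_all_edges)

lemma expectation_two_edge_coins:
  assumes "e \<in> all_edges n" "e' \<in> all_edges n" "e \<noteq> e'" "0 \<le> p" "p \<le> 1"
  shows "measure_pmf.expectation (edge_coins n p) (\<lambda>f. of_bool (f e \<and> f e')) = p\<^sup>2"
  using expectation_Pi_bernoulli_all[of "all_edges n" "{e, e'}" p] assms
  by (simp add: edge_coins_def finite_all_edges power2_eq_square)

lemma pmf_edge_coins:
  assumes "E \<subseteq> all_edges n" "0 \<le> p" "p \<le> 1"
  shows "pmf (edge_coins n p) (\<lambda>e. e \<in> E) = p ^ card E * (1 - p) ^ (card (all_edges n) - card E)"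
proof -
  have "pmf (edge_coins n p) (\<lambda>e. e \<in> E) = (\<Prod>e\<in>all_edges n. if e \<in> E then p else 1 - p)"
    unfolding edge_coins_def using assms
    by (subst pmf_Pi[OF finite_all_edges]) (auto intro!: prod.cong)
  also have "\<dots> = p ^ card E * (1 - p) ^ (card (all_edges n) - card E)"
    using assms(1) finite_all_edges[of n]
    by (simp add: prod.If_cases Int_absorb1 Diff_eq[symmetric] card_Diff_subset finite_subset)
  finally show ?thesis .
qed

lemma er_prob_eq_prob_edge_coins:
  assumes "0 \<le> p" "p \<le> 1"
  shows "er_prob n p P = measure_pmf.prob (edge_coins n p) {f. P (coin_graph n f)}"
proof -
  define A where "A = all_edges n"
  define C where "C = edge_coins n p"
  have "measure_pmf.prob C {f. P (coin_graph n f)} = measure_pmf.prob C ((\<lambda>E e. e \<in> E) ` {E \<in> Pow A. P E})"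
  proof (rule measure_prob_cong_0)
    fix f assume f: "f \<in> {f. P (coin_graph n f)} - (\<lambda>E e. e \<in> E) ` {E \<in> Pow A. P E}"
    have "coin_graph n f \<in> {E \<in> Pow A. P E}"
      using f by (auto simp: coin_graph_def A_def)
    then have "f \<noteq> (\<lambda>e. e \<in> coin_graph n f)"
      using f by blast
    then show "pmf C f = 0"
      unfolding C_def edge_coins_def
      by (intro pmf_Pi_outside[OF finite_all_edges]) (auto simp: coin_graph_def fun_eq_iff)
  next
    fix f assume "f \<in> (\<lambda>E e. e \<in> E) ` {E \<in> Pow A. P E} - {f. P (coin_graph n f)}"
    then obtain E where "E \<subseteq> A" "P E" "f = (\<lambda>e. e \<in> E)" "\<not> P (coin_graph n f)"
      by auto
    moreover from this have "coin_graph n f = E"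
      by (auto simp: coin_graph_def A_def)
    ultimately show "pmf C f = 0"
      by simp
  qed
  also have "\<dots> = (\<Sum>E\<in>{E \<in> Pow A. P E}. pmf C (\<lambda>e. e \<in> E))"
  proof -
    have "inj_on (\<lambda>E e. e \<in> E) {E \<in> Pow A. P E}"
      by (rule inj_onI) (metis Collect_mem_eq)
    then show ?thesis
      using finite_all_edges[of n] by (simp add: A_def measure_measure_pmf_finite sum.reindex)
  qed
  also have "\<dots> = er_prob n p P"
    unfolding er_prob_def simple_graphs_def A_def C_def
    by (intro sum.cong) (auto simp: pmf_edge_coins assms)
  finally show ?thesis
    by (simp add: C_def)
qed

section \<open>Concentration of degrees and codegrees\<close>

lemma prob_degree_deviation:
  assumes "v < n" "2 \<le> n" "0 \<le> p" "p \<le> 1" "0 \<le> \<epsilon>"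
  shows "measure_pmf.prob (edge_coins n p)
           {f. \<epsilon> \<le> \<bar>real (card (nbrs (coin_graph n f) v)) - real (n - 1) * p\<bar>}
         \<le> 2 * exp (-2 * \<epsilon>\<^sup>2 / real (n - 1))"
proof -
  define L where "L = {..<n} - {v}"
  define X where "X = (\<lambda>w f. of_bool (f {w, v}) :: real)"
  have card_L: "card L = n - 1"
    using \<open>v < n\<close> by (simp add: L_def)
  have deg: "real (card (nbrs (coin_graph n f) v)) = (\<Sum>w\<in>L. X w f)" for f
    unfolding L_def X_def using \<open>v < n\<close> by (rule card_nbrs_coin_graph)
  have mean: "(\<Sum>w\<in>L. measure_pmf.expectation (edge_coins n p) (X w)) = real (n - 1) * p"
    using assms card_L by (simp add: L_def X_def expectation_edge_coin doubleton_in_all_edges_iff)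
  have sum_sq: "(\<Sum>w\<in>L. (1 - 0)\<^sup>2) = real (n - 1)"
    using card_L by simp
  have "measure_pmf.prob (edge_coins n p) {f. \<epsilon> \<le> \<bar>(\<Sum>w\<in>L. X w f) - real (n - 1) * p\<bar>}
         \<le> 2 * exp (-2 * \<epsilon>\<^sup>2 / (\<Sum>w\<in>L. (1 - 0)\<^sup>2))"
    unfolding edge_coins_def
  proof (rule Hoeffding_ineq_Pi_pmf_abs_ge[where K = "\<lambda>w. {{w, v}}"])
    show "\<And>w. w \<in> L \<Longrightarrow> {{w, v}} \<subseteq> all_edges n"
      using assms(1) by (auto simp: L_def doubleton_in_all_edges_iff)
    show "disjoint_family_on (\<lambda>w. {{w, v}}) L"
      by (auto simp: disjoint_family_on_def doubleton_eq_iff)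
    show "0 < (\<Sum>w\<in>L. (1 - 0 :: real)\<^sup>2)"
      using sum_sq \<open>2 \<le> n\<close> by simp
    show "\<And>w f. w \<in> L \<Longrightarrow> X w f \<in> {0..1}"
      by (simp add: X_def)
    show "\<And>w f g. w \<in> L \<Longrightarrow> (\<And>e. e \<in> {{w, v}} \<Longrightarrow> f e = g e) \<Longrightarrow> X w f = X w g"
      by (simp add: X_def)
    show "(\<Sum>w\<in>L. measure_pmf.expectation (Pi_pmf (all_edges n) False (\<lambda>_. bernoulli_pmf p)) (X w))
          = real (n - 1) * p"
      using mean by (simp only: edge_coins_def)
  qed (simp_all add: L_def finite_all_edges \<open>0 \<le> \<epsilon>\<close>)
  then show ?thesis
    unfolding deg by (simp only: sum_sq)
qed

lemma expectation_codegree_term: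
  assumes "w < n" "u < n" "v < n" "w \<noteq> u" "w \<noteq> v" "u \<noteq> v" "0 \<le> p" "p \<le> 1" "0 \<le> c"
  shows "measure_pmf.expectation (edge_coins n p)
           (\<lambda>f. of_bool (f {w, u} \<and> f {w, v}) - c * of_bool (f {w, v})) = p * (p - c)"
proof -
  have edges: "{w, u} \<in> all_edges n" "{w, v} \<in> all_edges n" "{w, u} \<noteq> {w, v}"
    using assms by (auto simp: doubleton_in_all_edges_iff doubleton_eq_iff)
  have "measure_pmf.expectation (edge_coins n p)
          (\<lambda>f. of_bool (f {w, u} \<and> f {w, v}) - c * of_bool (f {w, v}))
        = measure_pmf.expectation (edge_coins n p) (\<lambda>f. of_bool (f {w, u} \<and> f {w, v}))
          - c * measure_pmf.expectation (edge_coins n p) (\<lambda>f. of_bool (f {w, v}))"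
    by (subst Bochner_Integration.integral_diff)
      (auto intro: measure_pmf.integrable_const_bound[where B = 1]
        measure_pmf.integrable_const_bound[where B = c] simp: \<open>0 \<le> c\<close>)
  also have "\<dots> = p * (p - c)"
    using edges assms(7,8)
    by (simp add: expectation_two_edge_coins expectation_edge_coin power2_eq_square algebra_simps)
  finally show ?thesis .
qed

lemma prob_codegree_deficit:
  assumes "u < n" "v < n" "u \<noteq> v" "3 \<le> n" "0 \<le> p" "p \<le> 1" "0 \<le> c" "c \<le> 1" "0 \<le> \<epsilon>"
  shows "measure_pmf.prob (edge_coins n p)
           {f. real (card (nbrs (coin_graph n f) u \<inter> nbrs (coin_graph n f) v))
                 - c * real (card (nbrs (coin_graph n f) v - {u}))
               \<le> real (n - 2) * p * (p - c) - \<epsilon>}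
         \<le> exp (-2 * \<epsilon>\<^sup>2 / real (n - 2))"
proof -
  define L where "L = {..<n} - {u, v}"
  define X where "X = (\<lambda>w f. of_bool (f {w, u} \<and> f {w, v}) - c * of_bool (f {w, v}) :: real)"
  have card_L: "card L = n - 2"
    using assms by (simp add: L_def card_Diff_subset)
  have codeg: "real (card (nbrs (coin_graph n f) u \<inter> nbrs (coin_graph n f) v))
                 - c * real (card (nbrs (coin_graph n f) v - {u})) = (\<Sum>w\<in>L. X w f)" for f
    unfolding L_def X_def using assms(1-3) by (rule codegree_statistic_coin_graph)
  have "measure_pmf.expectation (edge_coins n p) (X w) = p * (p - c)" if "w \<in> L" for w
    unfolding X_def using that assms by (intro expectation_codegree_term) (auto simp: L_def)
  then have mean: "(\<Sum>w\<in>L. measure_pmf.expectation (edge_coins n p) (X w)) = real (n - 2) * p * (p - c)"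
    using card_L by simp
  have sum_sq: "(\<Sum>w\<in>L. ((1 - c) - (- c))\<^sup>2) = real (n - 2)"
    using card_L by simp
  have "measure_pmf.prob (edge_coins n p) {f. (\<Sum>w\<in>L. X w f) \<le> real (n - 2) * p * (p - c) - \<epsilon>}
         \<le> exp (-2 * \<epsilon>\<^sup>2 / (\<Sum>w\<in>L. ((1 - c) - (- c))\<^sup>2))"
    unfolding edge_coins_def
  proof (rule Hoeffding_ineq_Pi_pmf_le[where K = "\<lambda>w. {{w, u}, {w, v}}"])
    show "\<And>w. w \<in> L \<Longrightarrow> {{w, u}, {w, v}} \<subseteq> all_edges n"
      using assms(1-3) by (auto simp: L_def doubleton_in_all_edges_iff)
    show "disjoint_family_on (\<lambda>w. {{w, u}, {w, v}}) L"
      by (auto simp: disjoint_family_on_def doubleton_eq_iff L_def)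
    show "\<And>w f. w \<in> L \<Longrightarrow> X w f \<in> {- c..1 - c}"
      using assms(7,8) by (auto simp: X_def)
    show "0 < (\<Sum>w\<in>L. ((1 - c) - (- c))\<^sup>2)"
      using sum_sq \<open>3 \<le> n\<close> by simp
    show "\<And>w f g. w \<in> L \<Longrightarrow> (\<And>e. e \<in> {{w, u}, {w, v}} \<Longrightarrow> f e = g e) \<Longrightarrow> X w f = X w g"
      by (simp add: X_def)
    show "(\<Sum>w\<in>L. measure_pmf.expectation (Pi_pmf (all_edges n) False (\<lambda>_. bernoulli_pmf p)) (X w))
          = real (n - 2) * p * (p - c)"
      using mean by (simp only: edge_coins_def)
  qed (simp_all add: L_def finite_all_edges \<open>0 \<le> \<epsilon>\<close>)
  then show ?thesis
    unfolding codeg by (simp only: sum_sq)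
qed

lemma in_Gn_if_degree_codegree_bounds:
  assumes "0 \<le> p * (1 - \<gamma>)" "p * (1 - \<gamma>) \<le> 1"
    and deg: "\<And>v. v < n \<Longrightarrow> p * real n * (1 - \<gamma>) < real (card (nbrs E v))
                              \<and> real (card (nbrs E v)) \<le> p * real n * (1 + \<gamma>)"
    and codeg: "\<And>u v. u < n \<Longrightarrow> v < n \<Longrightarrow> u \<noteq> v \<Longrightarrow>
                  p * (1 - \<gamma>) * real (card (nbrs E v - {u})) + 1 \<le> real (card (nbrs E u \<inter> nbrs E v))"
  shows "in_Gn n p \<gamma> E"
proof -
  have "p * (1 - \<gamma>) \<le> real (card (nbrs E u \<inter> nbrs E v)) / real (card (nbrs E v))"
    if "u < n" "v < n" for u v
  proof -
    have "0 \<le> p * (1 - \<gamma>) * real n"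
      using assms(1) by simp
    then have "0 \<le> p * real n * (1 - \<gamma>)"
      by (simp add: algebra_simps)
    \<comment> \<open>the strict lower degree bound excludes the junk value \<open>x / 0 = 0\<close>\<close>
    then have pos: "0 < real (card (nbrs E v))"
      using deg[OF \<open>v < n\<close>] by linarith
    have "p * (1 - \<gamma>) * real (card (nbrs E v)) \<le> real (card (nbrs E u \<inter> nbrs E v))"
    proof (cases "u = v")
      case True
      then show ?thesis
        using assms(2) pos by (simp add: mult_left_le_one_le)
    next
      case False
      have "finite (nbrs E v)"
        using pos by (simp add: card_gt_0_iff)
      then have "real (card (nbrs E v)) \<le> real (card (nbrs E v - {u})) + 1"
        by (cases "u \<in> nbrs E v") (auto simp: card_Diff_singleton card_gt_0_iff)
      then have "p * (1 - \<gamma>) * real (card (nbrs E v)) \<le> p * (1 - \<gamma>) * (real (card (nbrs E v - {u})) + 1)"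
        using assms(1) by (rule mult_left_mono)
      then have "p * (1 - \<gamma>) * real (card (nbrs E v))
                   \<le> p * (1 - \<gamma>) * real (card (nbrs E v - {u})) + p * (1 - \<gamma>)"
        by (simp add: distrib_left)
      then show ?thesis
        using codeg[OF that False] assms(2) by linarith
    qed
    then show ?thesis
      using pos by (simp add: pos_le_divide_eq)
  qed
  then show ?thesis
    unfolding in_Gn_def using deg by (auto intro: less_imp_le)
qed

lemma in_Gn_if_deviations_lt:
  assumes "0 \<le> p" "p \<le> 1" "0 \<le> \<gamma>" "\<gamma> \<le> 1" "1 \<le> n"
    and deg: "\<And>v. v < n \<Longrightarrow> \<bar>real (card (nbrs E v)) - real (n - 1) * p\<bar> < p * (real n * \<gamma> - 1)"
    and codeg: "\<And>u v. u < n \<Longrightarrow> v < n \<Longrightarrow> u \<noteq> v \<Longrightarrow>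
                  1 < real (card (nbrs E u \<inter> nbrs E v)) - p * (1 - \<gamma>) * real (card (nbrs E v - {u}))"
  shows "in_Gn n p \<gamma> E"
proof (rule in_Gn_if_degree_codegree_bounds)
  fix v assume "v < n"
  moreover have "real (n - 1) = real n - 1"
    using \<open>1 \<le> n\<close> by simp
  ultimately show "p * real n * (1 - \<gamma>) < real (card (nbrs E v))
                   \<and> real (card (nbrs E v)) \<le> p * real n * (1 + \<gamma>)"
    using deg[OF \<open>v < n\<close>] \<open>0 \<le> p\<close> by (auto simp: algebra_simps abs_less_iff)
next
  fix u v assume "u < n" "v < n" "u \<noteq> v"
  then show "p * (1 - \<gamma>) * real (card (nbrs E v - {u})) + 1 \<le> real (card (nbrs E u \<inter> nbrs E v))"
    using codeg[OF \<open>u < n\<close> \<open>v < n\<close> \<open>u \<noteq> v\<close>] by linarith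
qed (use assms(1-4) in \<open>auto simp: mult_le_one\<close>)

lemma one_minus_er_prob_le:
  assumes "0 \<le> p" "p \<le> 1" "\<And>f. f \<notin> B \<Longrightarrow> P (coin_graph n f)"
  shows "1 - er_prob n p P \<le> measure_pmf.prob (edge_coins n p) B"
proof -
  have "1 - er_prob n p P = measure_pmf.prob (edge_coins n p) (UNIV - {f. P (coin_graph n f)})"
    using measure_pmf.prob_compl[of "{f. P (coin_graph n f)}" "edge_coins n p"]
    by (simp add: er_prob_eq_prob_edge_coins assms(1,2))
  also have "\<dots> \<le> measure_pmf.prob (edge_coins n p) B"
    by (rule measure_pmf.finite_measure_mono) (use assms(3) in auto)
  finally show ?thesis .
qed

lemma measure_pmf_UN_le_card_mult:
  assumes "finite I" "\<And>i. i \<in> I \<Longrightarrow> measure_pmf.prob M (B i) \<le> K"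
  shows "measure_pmf.prob M (\<Union>i\<in>I. B i) \<le> real (card I) * K"
proof -
  have "measure_pmf.prob M (\<Union>i\<in>I. B i) \<le> (\<Sum>i\<in>I. measure_pmf.prob M (B i))"
    using assms(1) by (rule measure_pmf.finite_measure_subadditive_finite) simp
  also have "\<dots> \<le> real (card I) * K"
    using assms(2) by (rule sum_bounded_above)
  finally show ?thesis .
qed

lemma prob_some_degree_deviates:
  assumes "2 \<le> n" "0 \<le> p" "p \<le> 1" "0 \<le> \<epsilon>"
  shows "measure_pmf.prob (edge_coins n p)
           (\<Union>v\<in>{..<n}. {f. \<epsilon> \<le> \<bar>real (card (nbrs (coin_graph n f) v)) - real (n - 1) * p\<bar>})
         \<le> real n * (2 * exp (-2 * \<epsilon>\<^sup>2 / real (n - 1)))"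
proof -
  have "measure_pmf.prob (edge_coins n p)
          (\<Union>v\<in>{..<n}. {f. \<epsilon> \<le> \<bar>real (card (nbrs (coin_graph n f) v)) - real (n - 1) * p\<bar>})
        \<le> real (card {..<n}) * (2 * exp (-2 * \<epsilon>\<^sup>2 / real (n - 1)))"
  proof (rule measure_pmf_UN_le_card_mult)
    fix v assume "v \<in> {..<n}"
    then show "measure_pmf.prob (edge_coins n p)
                 {f. \<epsilon> \<le> \<bar>real (card (nbrs (coin_graph n f) v)) - real (n - 1) * p\<bar>}
               \<le> 2 * exp (-2 * \<epsilon>\<^sup>2 / real (n - 1))"
      using assms by (intro prob_degree_deviation) auto
  qed simp
  then show ?thesis
    by simp
qed

lemma prob_some_codegree_deficit:
  assumes "3 \<le> n" "0 \<le> p" "p \<le> 1" "0 \<le> c" "c \<le> 1" "0 \<le> \<epsilon>"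
  shows "measure_pmf.prob (edge_coins n p)
           (\<Union>(u, v)\<in>{(u, v) \<in> {..<n} \<times> {..<n}. u \<noteq> v}.
              {f. real (card (nbrs (coin_graph n f) u \<inter> nbrs (coin_graph n f) v))
                    - c * real (card (nbrs (coin_graph n f) v - {u}))
                  \<le> real (n - 2) * p * (p - c) - \<epsilon>})
         \<le> real n ^ 2 * exp (-2 * \<epsilon>\<^sup>2 / real (n - 2))"
proof -
  define pairs where "pairs = {(u, v) \<in> {..<n} \<times> {..<n}. u \<noteq> v}"
  have pairs: "pairs \<subseteq> {..<n} \<times> {..<n}"
    by (auto simp: pairs_def)
  then have "finite pairs"
    by (rule finite_subset) simp
  have "card pairs \<le> card ({..<n} \<times> {..<n})"
    using pairs by (intro card_mono) auto
  then have card_pairs: "real (card pairs) \<le> real n ^ 2"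
    by (simp add: power2_eq_square flip: of_nat_mult)
  have "measure_pmf.prob (edge_coins n p)
          (\<Union>(u, v)\<in>pairs. {f. real (card (nbrs (coin_graph n f) u \<inter> nbrs (coin_graph n f) v))
                                    - c * real (card (nbrs (coin_graph n f) v - {u}))
                                  \<le> real (n - 2) * p * (p - c) - \<epsilon>})
        \<le> real (card pairs) * exp (-2 * \<epsilon>\<^sup>2 / real (n - 2))"
  proof (rule measure_pmf_UN_le_card_mult[OF \<open>finite pairs\<close>])
    fix x assume "x \<in> pairs"
    then obtain u v where "x = (u, v)" "u < n" "v < n" "u \<noteq> v"
      by (auto simp: pairs_def)
    then show "measure_pmf.prob (edge_coins n p)
                 (case x of (u, v) \<Rightarrow> {f. real (card (nbrs (coin_graph n f) u \<inter> nbrs (coin_graph n f) v))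
                                          - c * real (card (nbrs (coin_graph n f) v - {u}))
                                        \<le> real (n - 2) * p * (p - c) - \<epsilon>})
               \<le> exp (-2 * \<epsilon>\<^sup>2 / real (n - 2))"
      using assms by (simp only: case_prod_conv) (intro prob_codegree_deficit; simp)
  qed
  also have "\<dots> \<le> real n ^ 2 * exp (-2 * \<epsilon>\<^sup>2 / real (n - 2))"
    using card_pairs by (intro mult_right_mono) auto
  finally show ?thesis
    by (simp only: pairs_def)
qed

lemma prob_not_in_Gn_le:
  assumes "0 \<le> p" "p \<le> 1" "0 \<le> \<gamma>" "\<gamma> \<le> 1" "3 \<le> n"
  defines "\<epsilon>\<^sub>1 \<equiv> p * (real n * \<gamma> - 1)" and "\<epsilon>\<^sub>2 \<equiv> real (n - 2) * p\<^sup>2 * \<gamma> - 1"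
  assumes "0 \<le> \<epsilon>\<^sub>1" "0 \<le> \<epsilon>\<^sub>2"
  shows "1 - er_prob n p (in_Gn n p \<gamma>)
           \<le> real n * (2 * exp (-2 * \<epsilon>\<^sub>1\<^sup>2 / real (n - 1))) + real n ^ 2 * exp (-2 * \<epsilon>\<^sub>2\<^sup>2 / real (n - 2))"
proof -
  define c where "c = p * (1 - \<gamma>)"
  have c: "0 \<le> c" "c \<le> 1"
    using assms(1-4) by (auto simp: c_def mult_le_one)
  define D where "D = (\<Union>v\<in>{..<n}. {f. \<epsilon>\<^sub>1 \<le> \<bar>real (card (nbrs (coin_graph n f) v)) - real (n - 1) * p\<bar>})"
  define C where "C = (\<Union>(u, v)\<in>{(u, v) \<in> {..<n} \<times> {..<n}. u \<noteq> v}.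
                        {f. real (card (nbrs (coin_graph n f) u \<inter> nbrs (coin_graph n f) v))
                              - c * real (card (nbrs (coin_graph n f) v - {u}))
                            \<le> real (n - 2) * p * (p - c) - \<epsilon>\<^sub>2})"
  \<comment> \<open>for this \<open>c\<close> the mean of the codegree statistic is \<open>(n - 2) p\<^sup>2 \<gamma>\<close>, so \<open>\<epsilon>\<^sub>2\<close> leaves margin 1\<close>
  have threshold: "real (n - 2) * p * (p - c) - \<epsilon>\<^sub>2 = 1"
    by (simp add: c_def \<epsilon>\<^sub>2_def algebra_simps power2_eq_square)
  have "1 - er_prob n p (in_Gn n p \<gamma>) \<le> measure_pmf.prob (edge_coins n p) (D \<union> C)"
  proof (rule one_minus_er_prob_le[OF assms(1,2)])
    fix f assume good: "f \<notin> D \<union> C"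
    show "in_Gn n p \<gamma> (coin_graph n f)"
    proof (rule in_Gn_if_deviations_lt)
      fix v assume "v < n"
      then have "f \<notin> {f. \<epsilon>\<^sub>1 \<le> \<bar>real (card (nbrs (coin_graph n f) v)) - real (n - 1) * p\<bar>}"
        using good unfolding D_def by blast
      then show "\<bar>real (card (nbrs (coin_graph n f) v)) - real (n - 1) * p\<bar> < p * (real n * \<gamma> - 1)"
        by (simp add: \<epsilon>\<^sub>1_def not_le)
    next
      fix u v assume "u < n" "v < n" "u \<noteq> v"
      then have "f \<notin> {f. real (card (nbrs (coin_graph n f) u \<inter> nbrs (coin_graph n f) v))
                             - c * real (card (nbrs (coin_graph n f) v - {u}))
                           \<le> real (n - 2) * p * (p - c) - \<epsilon>\<^sub>2}"
        using good unfolding C_def by blast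
      then show "1 < real (card (nbrs (coin_graph n f) u \<inter> nbrs (coin_graph n f) v))
                       - p * (1 - \<gamma>) * real (card (nbrs (coin_graph n f) v - {u}))"
        using threshold by (simp add: c_def not_le)
    qed (use assms(1-5) in auto)
  qed
  also have "\<dots> \<le> measure_pmf.prob (edge_coins n p) D + measure_pmf.prob (edge_coins n p) C"
    by (simp add: measure_Un_le)
  also have "measure_pmf.prob (edge_coins n p) D \<le> real n * (2 * exp (-2 * \<epsilon>\<^sub>1\<^sup>2 / real (n - 1)))"
    unfolding D_def using assms by (intro prob_some_degree_deviates) auto
  also have "measure_pmf.prob (edge_coins n p) C \<le> real n ^ 2 * exp (-2 * \<epsilon>\<^sub>2\<^sup>2 / real (n - 2))"
    unfolding C_def using assms c by (intro prob_some_codegree_deficit) auto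
  finally show ?thesis
    by simp
qed

section \<open>Asymptotics\<close>

lemma deviation_margins_ge:
  fixes N p \<gamma> :: real
  assumes "0 \<le> p" "p \<le> 1" "0 \<le> \<gamma>" "4 \<le> N" "4 \<le> N * (\<gamma> * p\<^sup>2)"
  shows "p * (N * \<gamma>) / 2 \<le> p * (N * \<gamma> - 1)"
    and "N * (\<gamma> * p\<^sup>2) / 4 \<le> (N - 2) * p\<^sup>2 * \<gamma> - 1"
proof -
  have "N * (\<gamma> * p\<^sup>2) \<le> N * \<gamma>"
    using assms(1-4) by (intro mult_left_mono mult_right_le_one_le) (auto simp: power_le_one)
  then have "p * 2 \<le> p * (N * \<gamma>)"
    using assms(1,5) by (intro mult_left_mono) auto
  moreover have "p * (N * \<gamma> - 1) = p * (N * \<gamma>) - p"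
    by (simp add: right_diff_distrib)
  ultimately show "p * (N * \<gamma>) / 2 \<le> p * (N * \<gamma> - 1)"
    by linarith
  have "N / 2 * (\<gamma> * p\<^sup>2) \<le> (N - 2) * (\<gamma> * p\<^sup>2)"
    using assms(3,4) by (intro mult_right_mono) auto
  then show "N * (\<gamma> * p\<^sup>2) / 4 \<le> (N - 2) * p\<^sup>2 * \<gamma> - 1"
    using assms(5) by (simp add: algebra_simps)
qed

lemma ln_le_mult_gamma_p_sq:
  fixes N p \<gamma> :: real
  assumes "0 \<le> p" "p \<le> 1" "0 \<le> \<gamma>" "\<gamma> \<le> 1/2" "0 \<le> N"
    and "24 * ln N \<le> N * \<gamma>\<^sup>2 * p ^ 4"
  shows "48 * ln N \<le> N * (\<gamma> * p\<^sup>2)"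
proof -
  have "\<gamma> * p\<^sup>2 \<le> \<gamma>"
    using assms(1-3) by (intro mult_right_le_one_le) (auto simp: power_le_one)
  then have "(\<gamma> * p\<^sup>2) * (\<gamma> * p\<^sup>2) \<le> (\<gamma> * p\<^sup>2) * (1 / 2)"
    using assms(3,4) by (intro mult_left_mono) auto
  then have "N * ((\<gamma> * p\<^sup>2) * (\<gamma> * p\<^sup>2)) \<le> N * ((\<gamma> * p\<^sup>2) * (1 / 2))"
    by (rule mult_left_mono) (use assms(5) in simp)
  then show ?thesis
    using assms(6) by (simp add: power2_eq_square power4_eq_xxxx algebra_simps)
qed

lemma Hoeffding_exponents_ge:
  fixes N p \<gamma> :: real
  assumes "0 < p" "p \<le> 1" "0 \<le> \<gamma>" "\<gamma> \<le> 1/2" "4 \<le> N"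
    and large: "24 * ln N \<le> N * \<gamma>\<^sup>2 * p ^ 4"
  defines "\<epsilon>\<^sub>1 \<equiv> p * (N * \<gamma> - 1)" and "\<epsilon>\<^sub>2 \<equiv> (N - 2) * p\<^sup>2 * \<gamma> - 1"
  shows "0 \<le> \<epsilon>\<^sub>1" "0 \<le> \<epsilon>\<^sub>2" "2 * ln N \<le> 2 * \<epsilon>\<^sub>1\<^sup>2 / (N - 1)" "3 * ln N \<le> 2 * \<epsilon>\<^sub>2\<^sup>2 / (N - 2)"
proof -
  have "exp 1 \<le> N"
    using exp_le assms(5) by linarith
  then have L: "1 \<le> ln N"
    using assms(5) by (simp add: ln_ge_iff)
  have "48 * ln N \<le> N * (\<gamma> * p\<^sup>2)"
    using assms(1-5) large by (intro ln_le_mult_gamma_p_sq) auto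
  then have "4 \<le> N * (\<gamma> * p\<^sup>2)"
    using L by linarith
  note margins = deviation_margins_ge[OF less_imp_le[OF assms(1)] assms(2,3,5) this, folded \<epsilon>\<^sub>1_def \<epsilon>\<^sub>2_def]
  have "0 \<le> p * (N * \<gamma>) / 2" "0 \<le> N * (\<gamma> * p\<^sup>2) / 4"
    using assms(1,3,5) by simp_all
  then show "0 \<le> \<epsilon>\<^sub>1" "0 \<le> \<epsilon>\<^sub>2"
    using margins by linarith+
  have "N * (24 * ln N) \<le> N * (N * \<gamma>\<^sup>2 * p ^ 4)"
    using large assms(5) by (intro mult_left_mono) auto
  moreover have "(p * (N * \<gamma>) / 2)\<^sup>2 \<le> \<epsilon>\<^sub>1\<^sup>2"
    using margins(1) assms(1,3,5) by (intro power_mono) auto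
  moreover have "(N * \<gamma>)\<^sup>2 * p ^ 4 \<le> (N * \<gamma>)\<^sup>2 * p\<^sup>2"
    using assms(1,2) by (intro mult_left_mono power_decreasing) auto
  ultimately have "6 * (N * ln N) \<le> \<epsilon>\<^sub>1\<^sup>2"
    by (simp add: power2_eq_square power4_eq_xxxx algebra_simps)
  moreover have "ln N * (N - 1) \<le> N * ln N" "0 \<le> N * ln N"
    using L assms(5) by (simp_all add: algebra_simps)
  ultimately have "ln N * (N - 1) \<le> \<epsilon>\<^sub>1\<^sup>2"
    by linarith
  then show "2 * ln N \<le> 2 * \<epsilon>\<^sub>1\<^sup>2 / (N - 1)"
    using assms(5) by (simp add: pos_le_divide_eq mult.assoc)
  have "(N * (\<gamma> * p\<^sup>2) / 4)\<^sup>2 \<le> \<epsilon>\<^sub>2\<^sup>2"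
    using margins(2) assms(1,3,5) by (intro power_mono) auto
  with \<open>N * (24 * ln N) \<le> N * (N * \<gamma>\<^sup>2 * p ^ 4)\<close> have "3 * (N * ln N) \<le> 2 * \<epsilon>\<^sub>2\<^sup>2"
    by (simp add: power2_eq_square power4_eq_xxxx algebra_simps)
  moreover have "ln N * (N - 2) \<le> N * ln N"
    using L by (simp add: algebra_simps)
  ultimately have "3 * (ln N * (N - 2)) \<le> 2 * \<epsilon>\<^sub>2\<^sup>2"
    by linarith
  then show "3 * ln N \<le> 2 * \<epsilon>\<^sub>2\<^sup>2 / (N - 2)"
    using assms(5) by (simp add: pos_le_divide_eq mult.assoc)
qed

lemma prob_not_in_Gn_le_three_div:
  assumes "0 < p" "p \<le> 1" "0 \<le> \<gamma>" "\<gamma> \<le> 1/2" "4 \<le> n"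
    and large: "24 * ln (real n) \<le> real n * \<gamma>\<^sup>2 * p ^ 4"
  shows "1 - er_prob n p (in_Gn n p \<gamma>) \<le> 3 / real n"
proof -
  define N where "N = real n"
  define \<epsilon>\<^sub>1 where "\<epsilon>\<^sub>1 = p * (N * \<gamma> - 1)"
  define \<epsilon>\<^sub>2 where "\<epsilon>\<^sub>2 = (N - 2) * p\<^sup>2 * \<gamma> - 1"
  have N: "4 \<le> N"
    using \<open>4 \<le> n\<close> by (simp add: N_def)
  note exponents = Hoeffding_exponents_ge[OF assms(1-4) N large[folded N_def], folded \<epsilon>\<^sub>1_def \<epsilon>\<^sub>2_def]
  have exp_ln: "exp (- (real k * ln N)) = 1 / N ^ k" for k
    using N by (simp add: exp_minus exp_of_nat_mult divide_inverse)
  have "exp (-2 * \<epsilon>\<^sub>1\<^sup>2 / (N - 1)) \<le> exp (- (real 2 * ln N))"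
    using exponents(3) by simp
  then have exp\<^sub>1: "exp (-2 * \<epsilon>\<^sub>1\<^sup>2 / (N - 1)) \<le> 1 / N\<^sup>2"
    by (simp only: exp_ln)
  have "exp (-2 * \<epsilon>\<^sub>2\<^sup>2 / (N - 2)) \<le> exp (- (real 3 * ln N))"
    using exponents(4) by simp
  then have exp\<^sub>2: "exp (-2 * \<epsilon>\<^sub>2\<^sup>2 / (N - 2)) \<le> 1 / N ^ 3"
    by (simp only: exp_ln)
  have "real (n - 1) = N - 1" "real (n - 2) = N - 2"
    using \<open>4 \<le> n\<close> by (simp_all add: N_def of_nat_diff)
  then have "1 - er_prob n p (in_Gn n p \<gamma>)
               \<le> N * (2 * exp (-2 * \<epsilon>\<^sub>1\<^sup>2 / (N - 1))) + N\<^sup>2 * exp (-2 * \<epsilon>\<^sub>2\<^sup>2 / (N - 2))"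
    using prob_not_in_Gn_le[of p \<gamma> n] exponents(1,2) assms(1-5) by (simp add: N_def \<epsilon>\<^sub>1_def \<epsilon>\<^sub>2_def)
  also have "\<dots> \<le> N * (2 * (1 / N\<^sup>2)) + N\<^sup>2 * (1 / N ^ 3)"
    using exp\<^sub>1 exp\<^sub>2 N by (intro add_mono mult_left_mono) auto
  also have "\<dots> = 3 / N"
    using N by (simp add: field_simps power2_eq_square power3_eq_cube)
  finally show ?thesis
    by (simp add: N_def)
qed

lemma eventually_ln_le_mult_sq:
  fixes \<gamma> :: "nat \<Rightarrow> real"
  assumes "filterlim (\<lambda>n. \<gamma> n / sqrt (ln (real n) / real n)) at_top sequentially"
  shows "eventually (\<lambda>n. K * ln (real n) \<le> real n * (\<gamma> n)\<^sup>2) sequentially"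
proof -
  have "eventually (\<lambda>n. sqrt \<bar>K\<bar> \<le> \<gamma> n / sqrt (ln (real n) / real n)) sequentially"
    using assms by (simp add: filterlim_at_top)
  then show ?thesis
    using eventually_ge_at_top[of 2]
  proof eventually_elim
    case (elim n)
    define s where "s = sqrt (ln (real n) / real n)"
    have "0 < ln (real n) / real n"
      using elim(2) by simp
    then have "0 < s" and s2: "s\<^sup>2 = ln (real n) / real n"
      by (simp_all add: s_def)
    then have "sqrt \<bar>K\<bar> * s \<le> \<gamma> n"
      using elim(1) by (simp add: s_def pos_le_divide_eq)
    then have "(sqrt \<bar>K\<bar> * s)\<^sup>2 \<le> (\<gamma> n)\<^sup>2"
      using \<open>0 < s\<close> by (intro power_mono) auto
    then have "\<bar>K\<bar> * ln (real n) \<le> real n * (\<gamma> n)\<^sup>2"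
      using elim(2) by (simp add: power_mult_distrib s2 field_simps)
    moreover have "K * ln (real n) \<le> \<bar>K\<bar> * ln (real n)"
      using elim(2) by (intro mult_right_mono) auto
    ultimately show ?case
      by linarith
  qed
qed

lemma er_prob_zero_in_Gn: "er_prob n 0 (in_Gn n 0 \<gamma>) = 1"
proof -
  have "bernoulli_pmf 0 = return_pmf False"
    by (rule pmf_eqI) (simp add: indicator_def)
  then have "edge_coins n 0 = return_pmf (\<lambda>_. False)"
    by (simp add: edge_coins_def finite_all_edges)
  moreover have "in_Gn n 0 \<gamma> (coin_graph n (\<lambda>_. False))"
    by (simp add: in_Gn_def coin_graph_def nbrs_def)
  ultimately show ?thesis
    by (simp add: er_prob_eq_prob_edge_coins)
qed

lemma prob_not_in_Gn_tendsto_zero: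
  fixes \<gamma> :: "nat \<Rightarrow> real"
  assumes "0 \<le> p" "p \<le> 1" "\<And>n. 0 \<le> \<gamma> n \<and> \<gamma> n \<le> 1/2"
    and "filterlim (\<lambda>n. \<gamma> n / sqrt (ln (real n) / real n)) at_top sequentially"
  shows "(\<lambda>n. 1 - er_prob n p (in_Gn n p (\<gamma> n))) \<longlonglongrightarrow> 0"
proof (cases "p = 0")
  case True
  then show ?thesis
    by (simp add: er_prob_zero_in_Gn)
next
  case False
  with assms(1) have "0 < p"
    by simp
  have "eventually (\<lambda>n. 24 / p ^ 4 * ln (real n) \<le> real n * (\<gamma> n)\<^sup>2) sequentially"
    using assms(4) by (rule eventually_ln_le_mult_sq)
  then have "eventually (\<lambda>n. 1 - er_prob n p (in_Gn n p (\<gamma> n)) \<le> 3 / real n) sequentially"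
    using eventually_ge_at_top[of 4]
  proof eventually_elim
    case (elim n)
    then have "24 * ln (real n) \<le> real n * (\<gamma> n)\<^sup>2 * p ^ 4"
      using \<open>0 < p\<close> by (simp add: field_simps)
    then show ?case
      using assms(2,3) \<open>0 < p\<close> elim(2) by (intro prob_not_in_Gn_le_three_div) auto
  qed
  moreover have "0 \<le> 1 - er_prob n p (in_Gn n p (\<gamma> n))" for n
    using measure_pmf.prob_le_1 by (simp add: er_prob_eq_prob_edge_coins assms(1,2))
  ultimately show ?thesis
    by (intro tendsto_sandwich[OF always_eventually _ tendsto_const lim_const_over_n]) auto
qed

theorem lemma1:
  fixes p :: real and \<gamma> :: "nat \<Rightarrow> real"
  assumes "0 \<le> p" "p \<le> 1"
    and "\<And>n. 0 \<le> \<gamma> n \<and> \<gamma> n \<le> 1/2"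
    and "filterlim (\<lambda>n. \<gamma> n / sqrt (ln (real n) / real n)) at_top sequentially"
    and "\<gamma> \<longlonglongrightarrow> 0"
  shows "\<exists>\<theta> :: nat \<Rightarrow> real. \<theta> \<longlonglongrightarrow> 0 \<and>
           (\<forall>n. er_prob n p (in_Gn n p (\<gamma> n)) \<ge> 1 - \<theta> n)"
proof -
  have "(\<lambda>n. 1 - er_prob n p (in_Gn n p (\<gamma> n))) \<longlonglongrightarrow> 0"
    using assms(1-4) by (rule prob_not_in_Gn_tendsto_zero)
  then show ?thesis
    by force
qed

end
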